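(* Assume $\mathbb Q\subset k$ and let $R$ be a $k$-algebra. Then for every $r\in\mathcal U^p(R;\Delta)$ one has $\varepsilon(r)\in R[[{\bf s}]]_{\Delta,+}$ and $\boldsymbol\varepsilon(r):=(\varepsilon^1(r),\dots,\varepsilon^p(r))\in\mathbb H^p(R;\Delta)$, $\boldsymbol\Sigma\circ\boldsymbol\varepsilon=\varepsilon$, and the three maps $$\boldsymbol\varepsilon:\mathcal U^p(R;\Delta)\to\mathbb H^p(R;\Delta),\qquad \varepsilon:\mathcal U^p(R;\Delta)\to R[[{\bf s}]]_{\Delta,+},\qquad \boldsymbol\Sigma:\mathbb H^p(R;\Delta)\to R[[{\bf s}]]_{\Delta,+}$$ are bijective.
   Context: $k$ is a commutative ring; ${\bf s}=\{s_1,\dots,s_p\}$ commuting variables, ${\bf s}^\alpha=s_1^{\alpha_1}\cdots s_p^{\alpha_p}$. A co-ideal is a non-empty $\Delta\subset\mathbb N^p$ with $\alpha\in\Delta,\alpha'\le\alpha$ (componentwise) $\Rightarrow\alpha'\in\Delta$. For a ring $R$, $R[[{\bf s}]]_\Delta$ is the ring of formal sums $\sum_{\alpha\in\Delta}r_\alpha{\bf s}^\alpha$ with truncated product $\sum_\alpha(\sum_{\beta+\gamma=\alpha}r_\beta r'_\gamma){\bf s}^\alpha$ (variables central); $R[[{\bf s}]]_{\Delta,+}$ is the set of those with zero constant coefficient. $\mathcal U^p(R;\Delta)$ is the multiplicative group of $r\in R[[{\bf s}]]_\Delta$ with $r_0=1$; $r^*$ is the inverse. $\chi^i_R(\sum r_\alpha{\bf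 s}^\alpha)=\sum\alpha_ir_\alpha{\bf s}^\alpha$, $\boldsymbol\chi_R(\sum r_\alpha{\bf s}^\alpha)=\sum|\alpha|r_\alpha{\bf s}^\alpha$ where $|\alpha|=\alpha_1+\dots+\alpha_p$; $\varepsilon^i(r)=r^*\chi^i_R(r)$ and $\varepsilon(r)=r^*\boldsymbol\chi_R(r)$. $\mathbb H^p(R;\Delta)$ is the set of $p$-tuples $(\delta^1,\dots,\delta^p)\in(R[[{\bf s}]]_{\Delta,+})^p$, $\delta^i=\sum_\alpha\delta^i_\alpha{\bf s}^\alpha$, such that (a) $\delta^i_\alpha=0$ whenever $\alpha_i=0$, and (b) $\chi^j_R(\delta^i)-\chi^i_R(\delta^j)=[\delta^i,\delta^j]$ for all $i,j$. The map $\boldsymbol\Sigma$ sends $(\delta^1,\dots,\delta^p)$ to $\sum_i\delta^i$. *)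

theory Defs
  imports Complex_Main
begin

text \<open>Multi-indices alpha in N^p are lists of naturals of length p; the variable
  index i ranges over 0..<p (paper: 1..p).\<close>

definition coideal :: "nat \<Rightarrow> nat list set \<Rightarrow> bool" where
  "coideal p \<Delta> \<longleftrightarrow> \<Delta> \<noteq> {} \<and> (\<forall>\<alpha>\<in>\<Delta>. length \<alpha> = p) \<and>
     (\<forall>\<alpha>\<in>\<Delta>. \<forall>\<beta>. list_all2 (\<le>) \<beta> \<alpha> \<longrightarrow> \<beta> \<in> \<Delta>)"

definition series :: "nat list set \<Rightarrow> (nat list \<Rightarrow> 'r::ring_1) set" where
  "series \<Delta> = {f. \<forall>\<alpha>. \<alpha> \<notin> \<Delta> \<longrightarrow> f \<alpha> = 0}"

definition series_plus :: "nat \<Rightarrow> nat list set \<Rightarrow> (nat list \<Rightarrow> 'r::ring_1) set" where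
  "series_plus p \<Delta> = {f \<in> series \<Delta>. f (replicate p 0) = 0}"

definition ps_mult :: "nat list set \<Rightarrow> (nat list \<Rightarrow> 'r::ring_1) \<Rightarrow> (nat list \<Rightarrow> 'r) \<Rightarrow> (nat list \<Rightarrow> 'r)" where
  "ps_mult \<Delta> f g = (\<lambda>\<alpha>. if \<alpha> \<in> \<Delta>
      then (\<Sum>\<beta>\<in>{\<beta>. list_all2 (\<le>) \<beta> \<alpha>}. f \<beta> * g (map2 (-) \<alpha> \<beta>)) else 0)"

definition ps_one :: "nat list set \<Rightarrow> (nat list \<Rightarrow> 'r::ring_1)" where
  "ps_one \<Delta> = (\<lambda>\<alpha>. if \<alpha> \<in> \<Delta> \<and> (\<forall>i\<in>set \<alpha>. i = 0) then 1 else 0)"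

definition units_U :: "nat \<Rightarrow> nat list set \<Rightarrow> (nat list \<Rightarrow> 'r::ring_1) set" where
  "units_U p \<Delta> = {r \<in> series \<Delta>. r (replicate p 0) = 1}"

definition ps_inv :: "nat list set \<Rightarrow> (nat list \<Rightarrow> 'r::ring_1) \<Rightarrow> (nat list \<Rightarrow> 'r)" where
  "ps_inv \<Delta> r = (THE s. s \<in> series \<Delta> \<and> ps_mult \<Delta> r s = ps_one \<Delta> \<and> ps_mult \<Delta> s r = ps_one \<Delta>)"

definition chi :: "nat \<Rightarrow> (nat list \<Rightarrow> 'r::ring_1) \<Rightarrow> (nat list \<Rightarrow> 'r)" where
  "chi i f = (\<lambda>\<alpha>. of_nat (\<alpha> ! i) * f \<alpha>)"

definition chi_tot :: "(nat list \<Rightarrow> 'r::ring_1) \<Rightarrow> (nat list \<Rightarrow> 'r)" where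
  "chi_tot f = (\<lambda>\<alpha>. of_nat (sum_list \<alpha>) * f \<alpha>)"

definition eps_i :: "nat \<Rightarrow> nat list set \<Rightarrow> (nat list \<Rightarrow> 'r::ring_1) \<Rightarrow> (nat list \<Rightarrow> 'r)" where
  "eps_i i \<Delta> r = ps_mult \<Delta> (ps_inv \<Delta> r) (chi i r)"

definition eps :: "nat list set \<Rightarrow> (nat list \<Rightarrow> 'r::ring_1) \<Rightarrow> (nat list \<Rightarrow> 'r)" where
  "eps \<Delta> r = ps_mult \<Delta> (ps_inv \<Delta> r) (chi_tot r)"

definition bold_eps :: "nat \<Rightarrow> nat list set \<Rightarrow> (nat list \<Rightarrow> 'r::ring_1) \<Rightarrow> (nat list \<Rightarrow> 'r) list" where
  "bold_eps p \<Delta> r = map (\<lambda>i. eps_i i \<Delta> r) [0..<p]"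

definition ps_bracket :: "nat list set \<Rightarrow> (nat list \<Rightarrow> 'r::ring_1) \<Rightarrow> (nat list \<Rightarrow> 'r) \<Rightarrow> (nat list \<Rightarrow> 'r)" where
  "ps_bracket \<Delta> f g = (\<lambda>\<alpha>. ps_mult \<Delta> f g \<alpha> - ps_mult \<Delta> g f \<alpha>)"

definition HS :: "nat \<Rightarrow> nat list set \<Rightarrow> (nat list \<Rightarrow> 'r::ring_1) list set" where
  "HS p \<Delta> = {ds. length ds = p \<and> (\<forall>i<p. ds ! i \<in> series_plus p \<Delta>) \<and>
      (\<forall>i<p. \<forall>\<alpha>. \<alpha> ! i = 0 \<longrightarrow> (ds ! i) \<alpha> = 0) \<and>
      (\<forall>i<p. \<forall>j<p. (\<lambda>\<alpha>. chi j (ds ! i) \<alpha> - chi i (ds ! j) \<alpha>) = ps_bracket \<Delta> (ds ! i) (ds ! j))}"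

definition Sigma_map :: "nat \<Rightarrow> (nat list \<Rightarrow> 'r::ring_1) list \<Rightarrow> (nat list \<Rightarrow> 'r)" where
  "Sigma_map p ds = (\<lambda>\<alpha>. \<Sum>i<p. (ds ! i) \<alpha>)"

end

theory Submission
  imports Defs "HOL-Library.Function_Algebras"
begin

(*
  The Euler operators chi^i are derivations of R[[s]]_Delta, and chi multiplies the coefficient
  of s^alpha by |alpha|, which is invertible in R for alpha \<noteq> 0 because Q \<subseteq> k.  Hence for
  every e with zero constant term the equation chi(r) = r e determines r \<in> U degree by degree,
  starting from r_0 = 1; this makes eps bijective.  Applying chi^i to r^* r = 1 shows that the
  eps^i(r) satisfy the integrability condition, and they sum to eps(r).  Conversely, for
  delta \<in> H with sum e let r solve chi(r) = r e: the defects u_i = chi^i(r) - r delta^i sum to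
  zero and, by integrability of delta, satisfy chi(u_i) = u_i e, so they vanish by the same
  degree recursion.  Thus bold-eps is bijective, and so is Sigma = eps \<circ> bold-eps^-1.
*)

section \<open>Multi-indices\<close>

abbreviation below :: "nat list \<Rightarrow> nat list set" where
  "below a \<equiv> {b. list_all2 (\<le>) b a}"

lemma list_all2_le_iff:
  "list_all2 (\<le>) b (a::nat list) \<longleftrightarrow> length b = length a \<and> (\<forall>i<length a. b!i \<le> a!i)"
  by (auto simp: list_all2_conv_all_nth)

lemma finite_below: "finite (below a)"
proof (rule finite_subset)
  show "below a \<subseteq> {xs. set xs \<subseteq> {0..sum_list a} \<and> length xs = length a}"
    by (auto simp: list_all2_le_iff in_set_conv_nth) (meson elem_le_sum_list order.trans)
  show "finite {xs. set xs \<subseteq> {0..sum_list a} \<and> length xs = length a}"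
    by (rule finite_lists_length_eq) simp
qed

lemma sum_below_below_reindex:
  "(\<Sum>b\<in>below a. \<Sum>c\<in>below b. F c (map2 (-) b c) (map2 (-) a b)) =
   (\<Sum>c\<in>below a. \<Sum>d\<in>below (map2 (-) a c). F c d (map2 (-) (map2 (-) a c) d))"
proof -
  have diff_diff: "map2 (-) (map2 (-) a c) (map2 (-) b c) = map2 (-) a b"
    if "b \<in> below a" "c \<in> below b" for b c
    using that by (auto simp: list_all2_le_iff intro!: nth_equalityI)
  have "(\<Sum>b\<in>below a. \<Sum>c\<in>below b. F c (map2 (-) b c) (map2 (-) a b)) =
        (\<Sum>(b, c)\<in>Sigma (below a) below. F c (map2 (-) b c) (map2 (-) a b))"
    by (rule sum.Sigma) (auto simp: finite_below)
  also have "\<dots> = (\<Sum>(c, d)\<in>Sigma (below a) (\<lambda>c. below (map2 (-) a c)). F c d (map2 (-) (map2 (-) a c) d))"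
    by (rule sum.reindex_bij_witness[where i="\<lambda>(c, d). (map2 (+) c d, c)" and j="\<lambda>(b, c). (c, map2 (-) b c)"])
      (auto simp: list_all2_le_iff diff_diff intro!: nth_equalityI, meson order.trans, metis add.commute le_diff_conv2)
  also have "\<dots> = (\<Sum>c\<in>below a. \<Sum>d\<in>below (map2 (-) a c). F c d (map2 (-) (map2 (-) a c) d))"
    by (rule sum.Sigma[symmetric]) (auto simp: finite_below)
  finally show ?thesis .
qed

lemma self_below: "a \<in> below a"
  by (simp add: list_all2_refl)

lemma map2_diff_below: "b \<in> below a \<Longrightarrow> map2 (-) a b \<in> below (a::nat list)"
  by (auto simp: list_all2_le_iff)

lemma sum_list_map2_diff:
  assumes "b \<in> below (a::nat list)"
  shows "sum_list (map2 (-) a b) + sum_list b = sum_list a"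
proof -
  have len: "length b = length a" and le: "\<forall>i<length a. b!i \<le> a!i"
    using assms by (auto simp: list_all2_le_iff)
  have "sum_list (map2 (-) a b) + sum_list b = (\<Sum>i<length a. (a!i - b!i) + b!i)"
    using len by (simp add: sum_list_sum_nth sum.distrib atLeast0LessThan)
  also have "\<dots> = (\<Sum>i<length a. a!i)"
    using le by (intro sum.cong) auto
  finally show ?thesis by (simp add: sum_list_sum_nth atLeast0LessThan)
qed

lemma sum_list_below_less:
  assumes "b \<in> below (a::nat list)" and "b \<noteq> a"
  shows "sum_list b < sum_list a"
proof -
  have len: "length b = length a" and le: "\<forall>i<length a. b!i \<le> a!i"
    using assms(1) by (auto simp: list_all2_le_iff)
  then obtain i where i: "i < length a" "b!i \<noteq> a!i"
    using assms(2) nth_equalityI by metis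
  have "(\<Sum>i<length a. b!i) < (\<Sum>i<length a. a!i)"
    using le i by (intro sum_strict_mono_ex1) (auto intro!: bexI[of _ i])
  thus ?thesis using len by (simp add: sum_list_sum_nth atLeast0LessThan)
qed

lemma sum_below_strict_cong:
  assumes "\<And>b. sum_list b < sum_list a \<Longrightarrow> f b = g b"
  shows "(\<Sum>b\<in>below a - {a}. H (f b) b) = (\<Sum>b\<in>below a - {a}. H (g b) b)"
  using assms by (intro sum.cong) (auto simp: sum_list_below_less)

lemma exists_fixpoint_sum_list_recursion:
  fixes F :: "(nat list \<Rightarrow> 'b) \<Rightarrow> nat list \<Rightarrow> 'b"
  assumes "\<And>f g a. (\<And>b. sum_list b < sum_list a \<Longrightarrow> f b = g b) \<Longrightarrow> F f a = F g a"
  shows "\<exists>s. \<forall>a. s a = F s a"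
proof -
  have "adm_wf (measure sum_list) F"
    unfolding adm_wf_def by (auto intro!: assms)
  hence "wfrec (measure sum_list) F = F (wfrec (measure sum_list) F)"
    by (rule wfrec_fixpoint[OF wf_measure])
  thus ?thesis by (intro exI allI) (rule fun_cong)
qed

section \<open>The truncated series ring\<close>

locale coideal_series =
  fixes p :: nat and \<Delta> :: "nat list set"
  assumes coideal: "coideal p \<Delta>"
begin

abbreviation origin :: "nat list" where
  "origin \<equiv> replicate p 0"

abbreviation ps_mult_syntax :: "(nat list \<Rightarrow> 'r::ring_1) \<Rightarrow> (nat list \<Rightarrow> 'r) \<Rightarrow> nat list \<Rightarrow> 'r"
    (infixl "\<odot>" 70) where
  "f \<odot> g \<equiv> ps_mult \<Delta> f g"

lemma length_mem: "a \<in> \<Delta> \<Longrightarrow> length a = p"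
  using coideal by (auto simp: coideal_def)

lemma mem_below: "a \<in> \<Delta> \<Longrightarrow> b \<in> below a \<Longrightarrow> b \<in> \<Delta>"
  using coideal by (auto simp: coideal_def)

lemma origin_below: "a \<in> \<Delta> \<Longrightarrow> origin \<in> below a"
  using length_mem by (auto simp: list_all2_le_iff)

lemma origin_mem: "origin \<in> \<Delta>"
proof -
  obtain a where "a \<in> \<Delta>" using coideal by (auto simp: coideal_def)
  thus ?thesis using mem_below origin_below by blast
qed

lemma below_origin: "below origin = {origin}"
  by (auto simp: list_all2_le_iff intro!: nth_equalityI)

lemma map2_diff_origin: "a \<in> \<Delta> \<Longrightarrow> map2 (-) a origin = a"
  using length_mem by (auto intro!: nth_equalityI)

lemma map2_diff_self: "a \<in> \<Delta> \<Longrightarrow> map2 (-) a a = origin"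
  using length_mem by (auto intro!: nth_equalityI)

lemma map2_diff_mem: "a \<in> \<Delta> \<Longrightarrow> b \<in> below a \<Longrightarrow> map2 (-) a b \<in> \<Delta>"
  using mem_below map2_diff_below by blast

lemma all_zero_iff_origin: "a \<in> \<Delta> \<Longrightarrow> (\<forall>i\<in>set a. i = 0) \<longleftrightarrow> a = origin"
  by (metis length_mem replicate_length_same in_set_replicate)

lemma sum_list_pos: "a \<in> \<Delta> \<Longrightarrow> a \<noteq> origin \<Longrightarrow> 0 < sum_list a"
  using all_zero_iff_origin by fastforce

lemma ps_one_mem: "a \<in> \<Delta> \<Longrightarrow> ps_one \<Delta> a = (if a = origin then 1 else 0)"
  by (simp add: ps_one_def all_zero_iff_origin)

lemma ps_one_below: "a \<in> \<Delta> \<Longrightarrow> b \<in> below a \<Longrightarrow> ps_one \<Delta> b = (if b = origin then 1 else 0)"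
  using ps_one_mem mem_below by blast

lemma series_out: "f \<in> series \<Delta> \<Longrightarrow> a \<notin> \<Delta> \<Longrightarrow> f a = 0"
  by (simp add: series_def)

lemma units_U_series: "r \<in> units_U p \<Delta> \<Longrightarrow> r \<in> series \<Delta>"
  by (simp add: units_U_def)

lemma ps_mult_series [simp]: "f \<odot> g \<in> series \<Delta>"
  by (simp add: series_def ps_mult_def)

lemma ps_mult_out: "a \<notin> \<Delta> \<Longrightarrow> (f \<odot> g) a = 0"
  by (simp add: ps_mult_def)

lemma ps_mult_mem: "a \<in> \<Delta> \<Longrightarrow> (f \<odot> g) a = (\<Sum>b\<in>below a. f b * g (map2 (-) a b))"
  by (simp add: ps_mult_def)

lemma ps_mult_origin: "(f \<odot> g) origin = f origin * g origin"
  using origin_mem by (simp add: ps_mult_mem below_origin map2_diff_self)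

lemma ps_mult_mem_split:
  "a \<in> \<Delta> \<Longrightarrow> (f \<odot> g) a = f a * g origin + (\<Sum>b\<in>below a - {a}. f b * g (map2 (-) a b))"
  by (simp add: ps_mult_mem sum.remove[OF finite_below self_below] map2_diff_self)

lemma ps_mult_assoc: "(f \<odot> g) \<odot> h = f \<odot> (g \<odot> h)"
proof
  fix a
  show "((f \<odot> g) \<odot> h) a = (f \<odot> (g \<odot> h)) a"
  proof (cases "a \<in> \<Delta>")
    case False
    thus ?thesis by (simp add: ps_mult_out)
  next
    case True
    have "((f \<odot> g) \<odot> h) a = (\<Sum>b\<in>below a. \<Sum>c\<in>below b. f c * g (map2 (-) b c) * h (map2 (-) a b))"
      using True by (simp add: ps_mult_mem mem_below[OF True] sum_distrib_right)
    also have "\<dots> = (\<Sum>c\<in>below a. \<Sum>d\<in>below (map2 (-) a c). f c * (g d * h (map2 (-) (map2 (-) a c) d)))"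
      by (subst sum_below_below_reindex) (simp add: mult.assoc)
    also have "\<dots> = (f \<odot> (g \<odot> h)) a"
      using True by (simp add: ps_mult_mem map2_diff_mem[OF True] sum_distrib_left)
    finally show ?thesis .
  qed
qed

lemma ps_mult_add_left: "(f + g) \<odot> h = f \<odot> h + g \<odot> h"
  by (rule ext) (simp add: ps_mult_def distrib_right sum.distrib)

lemma ps_mult_diff_left: "(f - g) \<odot> h = f \<odot> h - g \<odot> h"
  by (rule ext) (simp add: ps_mult_def left_diff_distrib sum_subtractf)

lemma ps_mult_diff_right: "f \<odot> (g - h) = f \<odot> g - f \<odot> h"
  by (rule ext) (simp add: ps_mult_def right_diff_distrib sum_subtractf)

lemma ps_mult_minus_left: "(- f) \<odot> g = - (f \<odot> g)"
  by (rule ext) (simp add: ps_mult_def sum_negf)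

lemma ps_mult_zero_left [simp]: "0 \<odot> f = 0"
  by (rule ext) (simp add: ps_mult_def)

lemma ps_mult_sum_left: "(\<lambda>a. \<Sum>j\<in>J. g j a) \<odot> f = (\<lambda>a. \<Sum>j\<in>J. (g j \<odot> f) a)"
  by (rule ext) (simp add: ps_mult_def sum_distrib_right sum.swap[of _ J])

lemma ps_mult_sum_right: "f \<odot> (\<lambda>a. \<Sum>j\<in>J. g j a) = (\<lambda>a. \<Sum>j\<in>J. (f \<odot> g j) a)"
  by (rule ext) (simp add: ps_mult_def sum_distrib_left sum.swap[of _ J])

lemma ps_one_left: "g \<in> series \<Delta> \<Longrightarrow> ps_one \<Delta> \<odot> g = g"
proof
  fix a assume g: "g \<in> series \<Delta>"
  show "(ps_one \<Delta> \<odot> g) a = g a"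
  proof (cases "a \<in> \<Delta>")
    case False
    thus ?thesis using g by (simp add: ps_mult_out series_out)
  next
    case True
    hence "(ps_one \<Delta> \<odot> g) a = (\<Sum>b\<in>below a. if b = origin then g (map2 (-) a b) else 0)"
      by (simp add: ps_mult_mem) (intro sum.cong, simp_all add: ps_one_below[OF True])
    thus ?thesis using True origin_below[OF True] by (simp add: finite_below map2_diff_origin)
  qed
qed

lemma ps_one_right: "g \<in> series \<Delta> \<Longrightarrow> g \<odot> ps_one \<Delta> = g"
proof
  fix a assume g: "g \<in> series \<Delta>"
  show "(g \<odot> ps_one \<Delta>) a = g a"
  proof (cases "a \<in> \<Delta>")
    case False
    thus ?thesis using g by (simp add: ps_mult_out series_out)
  next
    case True
    have off_diagonal: "ps_one \<Delta> (map2 (-) a b) = 0" if "b \<in> below a - {a}" for b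
    proof -
      from that have "sum_list b < sum_list a" "sum_list (map2 (-) a b) + sum_list b = sum_list a"
        by (auto intro: sum_list_below_less sum_list_map2_diff)
      hence "sum_list (map2 (-) a b) \<noteq> 0" by linarith
      thus ?thesis unfolding ps_one_def by (metis sum_list_eq_0_iff)
    qed
    have "(\<Sum>b\<in>below a - {a}. g b * ps_one \<Delta> (map2 (-) a b)) = 0"
      by (intro sum.neutral) (simp add: off_diagonal)
    thus ?thesis using True origin_mem by (simp add: ps_mult_mem_split ps_one_mem)
  qed
qed

lemma left_inverse_exists:
  assumes r: "r \<in> units_U p \<Delta>"
  shows "\<exists>s\<in>units_U p \<Delta>. s \<odot> r = ps_one \<Delta>"
proof -
  define F where "F s a =
      (if a \<in> \<Delta> then if a = origin then 1 else - (\<Sum>b\<in>below a - {a}. s b * r (map2 (-) a b)) else 0)"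
    for s :: "nat list \<Rightarrow> 'a" and a
  have "\<exists>s. \<forall>a. s a = F s a"
  proof (rule exists_fixpoint_sum_list_recursion)
    fix f g :: "nat list \<Rightarrow> 'a" and a
    assume "\<And>b. sum_list b < sum_list a \<Longrightarrow> f b = g b"
    from sum_below_strict_cong[OF this, where H="\<lambda>x b. x * r (map2 (-) a b)"]
    show "F f a = F g a" by (simp add: F_def)
  qed
  then obtain s where s: "\<And>a. s a = F s a" by blast
  have s_origin: "s origin = 1"
    using s[of origin] origin_mem by (simp add: F_def)
  have "s \<in> series \<Delta>"
    unfolding series_def by (auto simp: s[of _] F_def)
  hence "s \<in> units_U p \<Delta>"
    using s_origin by (simp add: units_U_def)
  moreover have "s \<odot> r = ps_one \<Delta>"
  proof
    fix a
    show "(s \<odot> r) a = ps_one \<Delta> a"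
    proof (cases "a \<in> \<Delta> \<and> a \<noteq> origin")
      case True
      with r show ?thesis
        by (subst ps_mult_mem_split) (auto simp: ps_one_mem units_U_def s[of a] F_def)
    next
      case False
      with r s_origin origin_mem show ?thesis
        by (auto simp: ps_mult_out ps_mult_origin ps_one_def units_U_def)
    qed
  qed
  ultimately show ?thesis by blast
qed

lemma ps_inv_inverse:
  assumes r: "r \<in> units_U p \<Delta>"
  shows "ps_inv \<Delta> r \<in> series \<Delta>" and "r \<odot> ps_inv \<Delta> r = ps_one \<Delta>" and "ps_inv \<Delta> r \<odot> r = ps_one \<Delta>"
proof -
  obtain s where s: "s \<in> units_U p \<Delta>" "s \<odot> r = ps_one \<Delta>"
    using left_inverse_exists[OF r] by blast
  obtain t where t: "t \<in> units_U p \<Delta>" "t \<odot> s = ps_one \<Delta>"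
    using left_inverse_exists[OF s(1)] by blast
  have "t = t \<odot> (s \<odot> r)" by (simp add: s(2) ps_one_right units_U_series t(1))
  also have "\<dots> = r" by (simp add: t(2) ps_one_left units_U_series r flip: ps_mult_assoc)
  finally have rs: "r \<odot> s = ps_one \<Delta>" using t(2) by simp
  have "ps_inv \<Delta> r = s"
    unfolding ps_inv_def
  proof (rule the_equality)
    fix s' assume s': "s' \<in> series \<Delta> \<and> r \<odot> s' = ps_one \<Delta> \<and> s' \<odot> r = ps_one \<Delta>"
    have "s' = s' \<odot> (r \<odot> s)" using s' by (simp add: rs ps_one_right)
    also have "\<dots> = s" using s' by (simp add: ps_one_left units_U_series s(1) flip: ps_mult_assoc)
    finally show "s' = s" .
  qed (use s rs units_U_series in blast)
  thus "ps_inv \<Delta> r \<in> series \<Delta>" "r \<odot> ps_inv \<Delta> r = ps_one \<Delta>" "ps_inv \<Delta> r \<odot> r = ps_one \<Delta>"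
    using s rs units_U_series by auto
qed

lemma ps_inv_mult_eq_iff:
  assumes "r \<in> units_U p \<Delta>" and "g \<in> series \<Delta>" and "e \<in> series \<Delta>"
  shows "ps_inv \<Delta> r \<odot> g = e \<longleftrightarrow> g = r \<odot> e"
  using assms ps_inv_inverse[OF assms(1)] ps_one_left by (metis ps_mult_assoc)

section \<open>Euler operators\<close>

lemma chi_diff: "chi i (f - g) = chi i f - chi i g"
  by (rule ext) (simp add: chi_def right_diff_distrib)

lemma chi_zero: "chi i 0 = 0"
  by (rule ext) (simp add: chi_def)

lemma chi_sum: "chi i (\<lambda>a. \<Sum>j\<in>J. g j a) = (\<lambda>a. \<Sum>j\<in>J. chi i (g j) a)"
  by (rule ext) (simp add: chi_def sum_distrib_left)

lemma chi_commute: "chi i (chi j f) = chi j (chi i f)"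
  unfolding chi_def by (rule ext) (metis mult.assoc mult_of_nat_commute)

lemma chi_series: "f \<in> series \<Delta> \<Longrightarrow> chi i f \<in> series \<Delta>"
  by (simp add: series_def chi_def)

lemma chi_ps_one: "i < p \<Longrightarrow> chi i (ps_one \<Delta>) = 0"
  by (rule ext) (auto simp: chi_def ps_one_def all_zero_iff_origin)

lemma chi_ps_mult:
  assumes i: "i < p"
  shows "chi i (f \<odot> g) = chi i f \<odot> g + f \<odot> chi i g"
proof
  fix a
  show "chi i (f \<odot> g) a = (chi i f \<odot> g + f \<odot> chi i g) a"
  proof (cases "a \<in> \<Delta>")
    case False
    thus ?thesis by (simp add: chi_def ps_mult_out)
  next
    case True
    have split: "of_nat (a!i) * (f b * g (map2 (-) a b)) =
          of_nat (b!i) * f b * g (map2 (-) a b) + f b * (of_nat (map2 (-) a b ! i) * g (map2 (-) a b))"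
      if "b \<in> below a" for b
    proof -
      have "b!i \<le> a!i" "map2 (-) a b ! i = a!i - b!i"
        using that i length_mem[OF True] by (auto simp: list_all2_le_iff)
      hence "(of_nat (a!i) :: 'a) = of_nat (b!i) + of_nat (map2 (-) a b ! i)"
        by (simp flip: of_nat_add)
      thus ?thesis by (simp add: distrib_right mult.assoc mult_of_nat_commute)
    qed
    have "chi i (f \<odot> g) a = (\<Sum>b\<in>below a. of_nat (a!i) * (f b * g (map2 (-) a b)))"
      using True by (simp add: chi_def ps_mult_mem sum_distrib_left)
    also have "\<dots> = (\<Sum>b\<in>below a.
        of_nat (b!i) * f b * g (map2 (-) a b) + f b * (of_nat (map2 (-) a b ! i) * g (map2 (-) a b)))"
      using split by (rule sum.cong[OF refl])
    also have "\<dots> = (chi i f \<odot> g + f \<odot> chi i g) a"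
      using True by (simp add: chi_def ps_mult_mem sum.distrib mult.assoc)
    finally show ?thesis .
  qed
qed

lemma chi_tot_eq_sum_chi:
  assumes "f \<in> series \<Delta>"
  shows "chi_tot f = (\<lambda>a. \<Sum>j<p. chi j f a)"
proof
  fix a
  show "chi_tot f a = (\<Sum>j<p. chi j f a)"
  proof (cases "a \<in> \<Delta>")
    case False
    thus ?thesis using assms by (simp add: chi_def chi_tot_def series_out)
  next
    case True
    thus ?thesis
      by (simp add: chi_def chi_tot_def length_mem sum_list_sum_nth sum_distrib_right atLeast0LessThan)
  qed
qed

section \<open>Logarithmic derivatives\<close>

lemma chi_tot_diff: "chi_tot (f - g) = chi_tot f - chi_tot g"
  by (rule ext) (simp add: chi_tot_def right_diff_distrib)

lemma chi_tot_series: "f \<in> series \<Delta> \<Longrightarrow> chi_tot f \<in> series \<Delta>"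
  by (simp add: series_def chi_tot_def)

lemma eps_eq_iff:
  assumes "r \<in> units_U p \<Delta>" and "e \<in> series \<Delta>"
  shows "eps \<Delta> r = e \<longleftrightarrow> chi_tot r = r \<odot> e"
  unfolding eps_def using assms by (simp add: ps_inv_mult_eq_iff units_U_series chi_tot_series)

lemma eps_i_eq_iff:
  assumes "r \<in> units_U p \<Delta>" and "e \<in> series \<Delta>"
  shows "eps_i i \<Delta> r = e \<longleftrightarrow> chi i r = r \<odot> e"
  unfolding eps_i_def using assms by (simp add: ps_inv_mult_eq_iff units_U_series chi_series)

lemma eps_series_plus: "eps \<Delta> r \<in> series_plus p \<Delta>"
  by (simp add: series_plus_def eps_def ps_mult_origin chi_tot_def sum_list_replicate)

lemma eps_i_series_plus: "i < p \<Longrightarrow> eps_i i \<Delta> r \<in> series_plus p \<Delta>"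
  by (simp add: series_plus_def eps_i_def ps_mult_origin chi_def)

lemma eps_i_vanishes:
  assumes i: "i < p" and a: "a ! i = 0"
  shows "eps_i i \<Delta> r a = 0"
proof (cases "a \<in> \<Delta>")
  case False
  thus ?thesis by (simp add: eps_i_def ps_mult_out)
next
  case True
  have "map2 (-) a b ! i = 0" if "b \<in> below a" for b
    using that a i length_mem[OF True] by (auto simp: list_all2_le_iff)
  thus ?thesis using True by (simp add: eps_i_def ps_mult_mem chi_def)
qed

lemma chi_tot_eq_ps_mult_imp_zero:
  fixes u e :: "nat list \<Rightarrow> 'a::ring_1"
  assumes inv_nat: "\<And>n::nat. 0 < n \<Longrightarrow> \<exists>c::'a. c * of_nat n = 1"
    and u: "u \<in> series \<Delta>" "u origin = 0" and e: "e origin = 0"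
    and eq: "chi_tot u = u \<odot> e"
  shows "u = 0"
proof -
  have "u a = 0" for a
  proof (induction "sum_list a" arbitrary: a rule: less_induct)
    case less
    show ?case
    proof (cases "a \<in> \<Delta> \<and> a \<noteq> origin")
      case False
      thus ?thesis using u series_out by auto
    next
      case True
      have "of_nat (sum_list a) * u a = (u \<odot> e) a"
        using fun_cong[OF eq, of a] by (simp add: chi_tot_def)
      also have "\<dots> = 0"
        using True e by (simp add: ps_mult_mem_split less sum_list_below_less)
      finally have "of_nat (sum_list a) * u a = 0" .
      moreover obtain c :: 'a where "c * of_nat (sum_list a) = 1"
        using inv_nat sum_list_pos True by blast
      ultimately show ?thesis by (metis mult.assoc mult_1 mult_zero_right)
    qed
  qed
  thus ?thesis by auto
qed

lemma exists_unit_chi_tot_eq_ps_mult: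
  fixes e :: "nat list \<Rightarrow> 'a::ring_1"
  assumes inv_nat: "\<And>n::nat. 0 < n \<Longrightarrow> \<exists>c::'a. c * of_nat n = 1"
    and e: "e \<in> series_plus p \<Delta>"
  shows "\<exists>r\<in>units_U p \<Delta>. chi_tot r = r \<odot> e"
proof -
  obtain c :: "nat \<Rightarrow> 'a" where c: "\<And>n. 0 < n \<Longrightarrow> of_nat n * c n = 1"
    using inv_nat by (metis mult_of_nat_commute)
  define F where "F r a = (if a \<in> \<Delta> then if a = origin then 1
      else c (sum_list a) * (\<Sum>b\<in>below a - {a}. r b * e (map2 (-) a b)) else 0)"
    for r :: "nat list \<Rightarrow> 'a" and a
  have "\<exists>r. \<forall>a. r a = F r a"
  proof (rule exists_fixpoint_sum_list_recursion)
    fix f g :: "nat list \<Rightarrow> 'a" and a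
    assume "\<And>b. sum_list b < sum_list a \<Longrightarrow> f b = g b"
    from sum_below_strict_cong[OF this, where H="\<lambda>x b. x * e (map2 (-) a b)"]
    show "F f a = F g a" by (simp add: F_def)
  qed
  then obtain r where r: "\<And>a. r a = F r a" by blast
  have "r \<in> series \<Delta>"
    unfolding series_def by (auto simp: r[of _] F_def)
  hence r_unit: "r \<in> units_U p \<Delta>"
    using r[of origin] origin_mem by (simp add: units_U_def F_def)
  have e_origin: "e origin = 0"
    using e by (simp add: series_plus_def)
  have "chi_tot r = r \<odot> e"
  proof
    fix a
    show "chi_tot r a = (r \<odot> e) a"
    proof (cases "a \<in> \<Delta> \<and> a \<noteq> origin")
      case True
      hence "of_nat (sum_list a) * c (sum_list a) = 1"
        using c sum_list_pos by blast
      thus ?thesis using True e_origin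
        by (simp add: chi_tot_def r[of a] F_def ps_mult_mem_split flip: mult.assoc)
    next
      case False
      thus ?thesis using e_origin
        by (auto simp: chi_tot_def ps_mult_out ps_mult_origin sum_list_replicate r[of _] F_def)
    qed
  qed
  thus ?thesis using r_unit by blast
qed

lemma bij_betw_eps:
  assumes inv_nat: "\<And>n::nat. 0 < n \<Longrightarrow> \<exists>c::'a::ring_1. c * of_nat n = 1"
  shows "bij_betw (eps \<Delta>) (units_U p \<Delta>) (series_plus p \<Delta> :: (nat list \<Rightarrow> 'a) set)"
  unfolding bij_betw_def
proof
  show "inj_on (eps \<Delta>) (units_U p \<Delta> :: (nat list \<Rightarrow> 'a) set)"
  proof (rule inj_onI)
    fix r r' :: "nat list \<Rightarrow> 'a"
    assume r: "r \<in> units_U p \<Delta>" and r': "r' \<in> units_U p \<Delta>" and eq: "eps \<Delta> r = eps \<Delta> r'"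
    define e where "e = eps \<Delta> r"
    have e: "e \<in> series \<Delta>" "e origin = 0"
      using eps_series_plus by (auto simp: e_def series_plus_def)
    have "chi_tot r = r \<odot> e" "chi_tot r' = r' \<odot> e"
      using eps_eq_iff[OF r e(1)] eps_eq_iff[OF r' e(1)] eq by (auto simp: e_def)
    hence "chi_tot (r - r') = (r - r') \<odot> e"
      by (simp add: chi_tot_diff ps_mult_diff_left)
    hence "r - r' = 0"
      using r r' e by (intro chi_tot_eq_ps_mult_imp_zero[OF inv_nat]) (auto simp: units_U_def series_def)
    thus "r = r'" by simp
  qed
  show "eps \<Delta> ` units_U p \<Delta> = (series_plus p \<Delta> :: (nat list \<Rightarrow> 'a) set)"
  proof (intro equalityI subsetI)
    fix e :: "nat list \<Rightarrow> 'a"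
    assume e: "e \<in> series_plus p \<Delta>"
    then obtain r where "r \<in> units_U p \<Delta>" "chi_tot r = r \<odot> e"
      using exists_unit_chi_tot_eq_ps_mult[OF inv_nat] by blast
    moreover have "e \<in> series \<Delta>" using e by (simp add: series_plus_def)
    ultimately show "e \<in> eps \<Delta> ` units_U p \<Delta>"
      using eps_eq_iff by blast
  qed (auto simp: eps_series_plus)
qed

lemma chi_ps_inv:
  assumes r: "r \<in> units_U p \<Delta>" and k: "k < p"
  shows "chi k (ps_inv \<Delta> r) = - (eps_i k \<Delta> r \<odot> ps_inv \<Delta> r)"
proof -
  let ?s = "ps_inv \<Delta> r"
  have "chi k ?s \<odot> r + ?s \<odot> chi k r = 0"
    using ps_inv_inverse(3)[OF r] chi_ps_one[OF k] by (simp flip: chi_ps_mult[OF k])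
  hence "(chi k ?s \<odot> r + ?s \<odot> chi k r) \<odot> ?s = 0" by simp
  hence "chi k ?s + eps_i k \<Delta> r \<odot> ?s = 0"
    using ps_inv_inverse[OF r] by (simp add: ps_mult_add_left ps_mult_assoc ps_one_right chi_series eps_i_def)
  thus ?thesis by (simp add: eq_neg_iff_add_eq_0)
qed

lemma eps_i_integrable:
  assumes r: "r \<in> units_U p \<Delta>" and i: "i < p" and j: "j < p"
  shows "chi j (eps_i i \<Delta> r) - chi i (eps_i j \<Delta> r) =
    eps_i i \<Delta> r \<odot> eps_i j \<Delta> r - eps_i j \<Delta> r \<odot> eps_i i \<Delta> r"
proof -
  have chi_eps_i: "chi l (eps_i k \<Delta> r) =
      ps_inv \<Delta> r \<odot> chi l (chi k r) - eps_i l \<Delta> r \<odot> eps_i k \<Delta> r" if "l < p" for k l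
    using that r by (simp add: eps_i_def chi_ps_mult chi_ps_inv ps_mult_minus_left ps_mult_assoc)
  show ?thesis
    using i j by (simp add: chi_eps_i chi_commute[of i j])
qed

lemma HS_iff: "ds \<in> HS p \<Delta> \<longleftrightarrow> length ds = p \<and> (\<forall>i<p. ds ! i \<in> series_plus p \<Delta>) \<and>
    (\<forall>i<p. \<forall>a. a ! i = 0 \<longrightarrow> (ds ! i) a = 0) \<and>
    (\<forall>i<p. \<forall>j<p. chi j (ds ! i) - chi i (ds ! j) = ds ! i \<odot> ds ! j - ds ! j \<odot> ds ! i)"
  by (simp add: HS_def ps_bracket_def fun_diff_def)

lemma HS_length: "ds \<in> HS p \<Delta> \<Longrightarrow> length ds = p"
  by (simp add: HS_iff)

lemma HS_series_plus: "ds \<in> HS p \<Delta> \<Longrightarrow> i < p \<Longrightarrow> ds ! i \<in> series_plus p \<Delta>"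
  by (simp add: HS_iff)

lemma HS_integrable:
  "ds \<in> HS p \<Delta> \<Longrightarrow> i < p \<Longrightarrow> j < p \<Longrightarrow> chi j (ds ! i) - chi i (ds ! j) = ds ! i \<odot> ds ! j - ds ! j \<odot> ds ! i"
  by (simp add: HS_iff)

lemma length_bold_eps [simp]: "length (bold_eps p \<Delta> r) = p"
  by (simp add: bold_eps_def)

lemma bold_eps_nth: "i < p \<Longrightarrow> bold_eps p \<Delta> r ! i = eps_i i \<Delta> r"
  by (simp add: bold_eps_def)

lemma bold_eps_HS: "r \<in> units_U p \<Delta> \<Longrightarrow> bold_eps p \<Delta> r \<in> HS p \<Delta>"
  by (simp add: HS_iff bold_eps_nth eps_i_series_plus eps_i_vanishes eps_i_integrable)

lemma Sigma_map_bold_eps: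
  assumes r: "r \<in> units_U p \<Delta>"
  shows "Sigma_map p (bold_eps p \<Delta> r) = eps \<Delta> r"
  using chi_tot_eq_sum_chi[OF units_U_series[OF r]]
  by (simp add: Sigma_map_def bold_eps_nth eps_i_def eps_def ps_mult_sum_right)

lemma chi_defect_integrable:
  fixes r :: "nat list \<Rightarrow> 'a::ring_1"
  assumes ij: "i < p" "j < p"
    and integrable: "chi j (\<delta> i) - chi i (\<delta> j) = \<delta> i \<odot> \<delta> j - \<delta> j \<odot> \<delta> i"
    and u: "\<And>k. u k = chi k r - r \<odot> \<delta> k"
  shows "chi j (u i) - chi i (u j) = u i \<odot> \<delta> j - u j \<odot> \<delta> i"
proof -
  have "chi j (u i) - chi i (u j) =
      chi j (chi i r) - chi i (chi j r) - (chi j r \<odot> \<delta> i - chi i r \<odot> \<delta> j)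
      - r \<odot> (chi j (\<delta> i) - chi i (\<delta> j))"
    using ij by (simp add: u chi_diff chi_ps_mult ps_mult_diff_right algebra_simps)
  also have "\<dots> = - (chi j r \<odot> \<delta> i - chi i r \<odot> \<delta> j) - r \<odot> (\<delta> i \<odot> \<delta> j - \<delta> j \<odot> \<delta> i)"
    by (simp add: chi_commute[of j i] integrable)
  also have "\<dots> = u i \<odot> \<delta> j - u j \<odot> \<delta> i"
    by (simp add: u ps_mult_diff_left ps_mult_diff_right ps_mult_assoc algebra_simps)
  finally show ?thesis .
qed

lemma HS_subset_image_bold_eps:
  assumes inv_nat: "\<And>n::nat. 0 < n \<Longrightarrow> \<exists>c::'a::ring_1. c * of_nat n = 1"
  shows "HS p \<Delta> \<subseteq> bold_eps p \<Delta> ` (units_U p \<Delta> :: (nat list \<Rightarrow> 'a) set)"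
proof
  fix ds :: "(nat list \<Rightarrow> 'a) list"
  assume ds: "ds \<in> HS p \<Delta>"
  define \<delta> where "\<delta> k = ds ! k" for k
  define e where "e = Sigma_map p ds"
  have \<delta>: "\<delta> k \<in> series \<Delta>" "\<delta> k origin = 0" if "k < p" for k
    using HS_series_plus[OF ds that] by (simp_all add: series_plus_def \<delta>_def)
  have e: "e = (\<lambda>a. \<Sum>k<p. \<delta> k a)" "e \<in> series_plus p \<Delta>"
    using \<delta> by (auto simp: e_def Sigma_map_def \<delta>_def series_plus_def series_def)
  obtain r where r: "r \<in> units_U p \<Delta>" and r_eq: "chi_tot r = r \<odot> e"
    using exists_unit_chi_tot_eq_ps_mult[OF inv_nat e(2)] by blast
  define u where "u k = chi k r - r \<odot> \<delta> k" for k
  have u_series: "u k \<in> series \<Delta>" for k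
    using chi_series[OF units_U_series[OF r]] by (auto simp: u_def series_def ps_mult_out)
  have sum_u: "(\<lambda>a. \<Sum>k<p. u k a) = 0"
    using r_eq chi_tot_eq_sum_chi[OF units_U_series[OF r]]
    by (simp add: u_def e(1) fun_eq_iff sum_subtractf ps_mult_sum_right)
  \<comment> \<open>Summing the integrability relation of the defects over j, with \<open>\<Sum>j. u j = 0\<close>,
    gives \<open>chi_tot (u i) = u i \<odot> e\<close>.\<close>
  have u_zero: "u i = 0" if i: "i < p" for i
  proof (rule chi_tot_eq_ps_mult_imp_zero[OF inv_nat u_series])
    show "u i origin = 0" "e origin = 0"
      using i \<delta> e(2) by (simp_all add: u_def chi_def ps_mult_origin series_plus_def)
    have "chi j (u i) = chi i (u j) + u i \<odot> \<delta> j - u j \<odot> \<delta> i" if j: "j < p" for j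
      using chi_defect_integrable[OF i j HS_integrable[OF ds i j] u_def[unfolded \<delta>_def]]
      by (simp add: \<delta>_def algebra_simps)
    hence "chi_tot (u i) = (\<lambda>a. \<Sum>j<p. chi i (u j) a + (u i \<odot> \<delta> j) a - (u j \<odot> \<delta> i) a)"
      by (simp add: chi_tot_eq_sum_chi[OF u_series])
    also have "\<dots> = chi i (\<lambda>a. \<Sum>j<p. u j a) + u i \<odot> e - (\<lambda>a. \<Sum>j<p. u j a) \<odot> \<delta> i"
      by (simp add: e(1) chi_sum ps_mult_sum_right ps_mult_sum_left fun_eq_iff sum.distrib sum_subtractf)
    finally show "chi_tot (u i) = u i \<odot> e"
      by (simp add: sum_u chi_zero)
  qed
  have "eps_i i \<Delta> r = \<delta> i" if "i < p" for i
    using u_zero[OF that] by (simp add: eps_i_eq_iff[OF r \<delta>(1)[OF that]] u_def)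
  hence "bold_eps p \<Delta> r = ds"
    using HS_length[OF ds] by (intro nth_equalityI) (simp_all add: bold_eps_nth \<delta>_def)
  thus "ds \<in> bold_eps p \<Delta> ` units_U p \<Delta>"
    using r by blast
qed

lemma bij_betw_bold_eps:
  assumes inv_nat: "\<And>n::nat. 0 < n \<Longrightarrow> \<exists>c::'a::ring_1. c * of_nat n = 1"
  shows "bij_betw (bold_eps p \<Delta>) (units_U p \<Delta>) (HS p \<Delta> :: (nat list \<Rightarrow> 'a) list set)"
  unfolding bij_betw_def
proof
  have "inj_on (Sigma_map p \<circ> bold_eps p \<Delta>) (units_U p \<Delta> :: (nat list \<Rightarrow> 'a) set)"
    using bij_betw_eps[OF inv_nat] by (simp add: bij_betw_def inj_on_def Sigma_map_bold_eps)
  thus "inj_on (bold_eps p \<Delta>) (units_U p \<Delta> :: (nat list \<Rightarrow> 'a) set)"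
    by (rule inj_on_imageI2)
  show "bold_eps p \<Delta> ` units_U p \<Delta> = (HS p \<Delta> :: (nat list \<Rightarrow> 'a) list set)"
    using bold_eps_HS HS_subset_image_bold_eps[OF inv_nat] by blast
qed

lemma bij_betw_Sigma_map:
  assumes inv_nat: "\<And>n::nat. 0 < n \<Longrightarrow> \<exists>c::'a::ring_1. c * of_nat n = 1"
  shows "bij_betw (Sigma_map p) (HS p \<Delta>) (series_plus p \<Delta> :: (nat list \<Rightarrow> 'a) set)"
proof -
  have "bij_betw (Sigma_map p \<circ> bold_eps p \<Delta>) (units_U p \<Delta>) (series_plus p \<Delta> :: (nat list \<Rightarrow> 'a) set)
    \<longleftrightarrow> bij_betw (eps \<Delta>) (units_U p \<Delta>) (series_plus p \<Delta> :: (nat list \<Rightarrow> 'a) set)"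
    by (rule bij_betw_cong) (simp add: Sigma_map_bold_eps)
  hence "bij_betw (Sigma_map p \<circ> bold_eps p \<Delta>) (units_U p \<Delta>) (series_plus p \<Delta> :: (nat list \<Rightarrow> 'a) set)"
    using bij_betw_eps[OF inv_nat] by blast
  thus ?thesis
    using bij_betw_comp_iff[OF bij_betw_bold_eps[OF inv_nat]] by blast
qed

end

lemma rat_hom_inverse_of_nat:
  fixes h :: "rat \<Rightarrow> 'r::ring_1" and n :: nat
  assumes one: "h 1 = 1" and add: "\<And>a b. h (a + b) = h a + h b"
    and mult: "\<And>a b. h (a * b) = h a * h b" and n: "0 < n"
  shows "\<exists>c::'r. c * of_nat n = 1"
proof
  have of_nat: "h (of_nat m) = of_nat m" for m
  proof (induction m)
    case 0 show ?case using add[of 0 0] by simp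
  next
    case (Suc m) thus ?case using add[of 1 "of_nat m"] one by simp
  qed
  have "h (1 / of_nat n) * of_nat n = h (1 / of_nat n * of_nat n)"
    by (simp only: mult of_nat)
  also have "\<dots> = 1" using n one by simp
  finally show "h (1 / of_nat n) * of_nat n = 1" .
qed

theorem mainTheorem6:
  fixes \<psi> :: "rat \<Rightarrow> 'k::comm_ring_1" and \<phi> :: "'k \<Rightarrow> 'r::ring_1"
    and p :: nat and \<Delta> :: "nat list set"
  assumes Q_sub_k: "inj \<psi>" "\<psi> 1 = 1" "\<And>a b. \<psi> (a + b) = \<psi> a + \<psi> b" "\<And>a b. \<psi> (a * b) = \<psi> a * \<psi> b"
    and k_alg: "\<phi> 1 = 1" "\<And>a b. \<phi> (a + b) = \<phi> a + \<phi> b" "\<And>a b. \<phi> (a * b) = \<phi> a * \<phi> b"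
      "\<And>a x. \<phi> a * x = x * \<phi> a"
    and \<Delta>: "coideal p \<Delta>"
  shows "(\<forall>r\<in>(units_U p \<Delta> :: (nat list \<Rightarrow> 'r) set).
            eps \<Delta> r \<in> series_plus p \<Delta> \<and> bold_eps p \<Delta> r \<in> HS p \<Delta> \<and>
            Sigma_map p (bold_eps p \<Delta> r) = eps \<Delta> r)
     \<and> bij_betw (bold_eps p \<Delta>) (units_U p \<Delta> :: (nat list \<Rightarrow> 'r) set) (HS p \<Delta>)
     \<and> bij_betw (eps \<Delta>) (units_U p \<Delta> :: (nat list \<Rightarrow> 'r) set) (series_plus p \<Delta>)
     \<and> bij_betw (Sigma_map p) (HS p \<Delta> :: (nat list \<Rightarrow> 'r) list set) (series_plus p \<Delta>)"
proof -
  interpret coideal_series p \<Delta> by (rule coideal_series.intro) (rule \<Delta>)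
  have inv_nat: "\<exists>c::'r. c * of_nat n = 1" if "0 < n" for n :: nat
    by (rule rat_hom_inverse_of_nat[of "\<phi> \<circ> \<psi>"]) (simp_all add: Q_sub_k(2-4) k_alg(1-3) that)
  have "\<forall>r\<in>(units_U p \<Delta> :: (nat list \<Rightarrow> 'r) set).
      eps \<Delta> r \<in> series_plus p \<Delta> \<and> bold_eps p \<Delta> r \<in> HS p \<Delta> \<and> Sigma_map p (bold_eps p \<Delta> r) = eps \<Delta> r"
    by (simp add: eps_series_plus bold_eps_HS Sigma_map_bold_eps)
  thus ?thesis
    using bij_betw_bold_eps[OF inv_nat] bij_betw_eps[OF inv_nat] bij_betw_Sigma_map[OF inv_nat]
    by (intro conjI)
qed

end
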